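(* Let $b>0$ and consider the Born–Infeld Lagrangian $L(F,G)=\sqrt{b^4+\tfrac12 b^2F-\tfrac1{16}G^2}-b^2$ on the region where $b^4+\tfrac12b^2F-\tfrac1{16}G^2>0$. Then (i) the quantities $\Omega_1,\Omega_2,\Omega_3$ (formed from $L_F,L_{FF},L_{FG},L_{GG},F,G$ as below) vanish identically on this region; and (ii) for any antisymmetric background $F_{\mu\nu}$ in this region, antisymmetric $f_{\mu\nu}$ and covector $k_\lambda$ satisfying (C) $f_{\mu\nu}k_\lambda+f_{\nu\lambda}k_\mu+f_{\lambda\mu}k_\nu=0$ and (E) $L_F f^{\mu\nu}k_\nu+A F^{\mu\nu}k_\nu+B\tilde F^{\mu\nu}k_\nu=0$ with $A\neq0$, one has $$\Big[\big(b^2+\tfrac12F\big)\eta^{\mu\nu}+F^{\mu}{}_{\lambda}F^{\lambda\nu}\Big]k_\mu k_\nu=0.$$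
   Context: Minkowski metric $\eta_{\mu\nu}=\mathrm{diag}(1,-1,-1,-1)$, indices raised/lowered with $\eta$. $F=F^{\mu\nu}F_{\mu\nu}$, $G=F^{\mu\nu}\tilde F_{\mu\nu}$, with dual $\tilde F_{\alpha\beta}=\tfrac12\eta_{\alpha\beta}{}^{\mu\nu}F_{\mu\nu}$ (Levi-Civita tensor), so that $\tilde F_{\mu\nu}F^{\nu\lambda}=-\tfrac14G\delta_\mu^\lambda$ and $\tilde F_{\mu\lambda}\tilde F^{\lambda\nu}-F_{\mu\lambda}F^{\lambda\nu}=\tfrac12F\delta_\mu^\nu$. Subscripts denote partial derivatives of $L$ evaluated at $(F,G)$. $\xi=F^{\alpha\beta}f_{\alpha\beta}$, $\zeta=\tilde F^{\alpha\beta}f_{\alpha\beta}$, $A=2(\xi L_{FF}+\zeta L_{FG})$, $B=2(\xi L_{FG}+\zeta L_{GG})$. $\Omega_1=-L_FL_{FG}+2FL_{FG}L_{GG}+G(L_{GG}^2-L_{FG}^2)$, $\Omega_2=(L_F+2GL_{FG})(L_{GG}-L_{FF})+2F(L_{FF}L_{GG}+L_{FG}^2)$, $\Omega_3=L_FL_{FG}+2FL_{FF}L_{FG}+G(L_{FG}^2-L_{FF}^2)$. *)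

theory Defs
  imports "HOL-Analysis.Analysis"
begin

text \<open>Spacetime indices are natural numbers 0,1,2,3; tensors are functions of
  their indices (only values at indices < 4 matter). A covariant 2-tensor
  T_{mu nu} is a function nat => nat => real, a covector k_mu is nat => real.\<close>

text \<open>Minkowski metric diag(1,-1,-1,-1); numerically the same for eta_{mu nu}
  and eta^{mu nu}.\<close>
definition eta :: "nat \<Rightarrow> nat \<Rightarrow> real" where
  "eta \<mu> \<nu> = (if \<mu> = \<nu> then (if \<mu> = 0 then 1 else -1) else 0)"

definition raise2 :: "(nat \<Rightarrow> nat \<Rightarrow> real) \<Rightarrow> nat \<Rightarrow> nat \<Rightarrow> real" where
  "raise2 T \<mu> \<nu> = (\<Sum>\<alpha><4. \<Sum>\<beta><4. eta \<mu> \<alpha> * eta \<nu> \<beta> * T \<alpha> \<beta>)"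

definition raise1 :: "(nat \<Rightarrow> nat \<Rightarrow> real) \<Rightarrow> nat \<Rightarrow> nat \<Rightarrow> real" where
  "raise1 T \<mu> l = (\<Sum>\<alpha><4. eta \<mu> \<alpha> * T \<alpha> l)"

text \<open>Covariant Levi-Civita tensor with epsilon_{0123} = 1: for indices in
  {0..3} the Vandermonde product of differences divided by 1!2!3! = 12 is the
  sign of the permutation (and 0 if two indices coincide).\<close>
definition levi :: "nat \<Rightarrow> nat \<Rightarrow> nat \<Rightarrow> nat \<Rightarrow> real" where
  "levi a b c d =
     (real b - real a) * (real c - real a) * (real d - real a) *
     (real c - real b) * (real d - real b) * (real d - real c) / 12"

definition dual :: "(nat \<Rightarrow> nat \<Rightarrow> real) \<Rightarrow> nat \<Rightarrow> nat \<Rightarrow> real" where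
  "dual T \<alpha> \<beta> = 1/2 * (\<Sum>\<mu><4. \<Sum>\<nu><4.
      (\<Sum>\<gamma><4. \<Sum>\<delta><4. levi \<alpha> \<beta> \<gamma> \<delta> * eta \<gamma> \<mu> * eta \<delta> \<nu>) * T \<mu> \<nu>)"

definition antisym2 :: "(nat \<Rightarrow> nat \<Rightarrow> real) \<Rightarrow> bool" where
  "antisym2 T \<longleftrightarrow> (\<forall>\<mu><4. \<forall>\<nu><4. T \<mu> \<nu> = - T \<nu> \<mu>)"

definition invF :: "(nat \<Rightarrow> nat \<Rightarrow> real) \<Rightarrow> real" where
  "invF T = (\<Sum>\<mu><4. \<Sum>\<nu><4. raise2 T \<mu> \<nu> * T \<mu> \<nu>)"

definition invG :: "(nat \<Rightarrow> nat \<Rightarrow> real) \<Rightarrow> real" where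
  "invG T = (\<Sum>\<mu><4. \<Sum>\<nu><4. raise2 T \<mu> \<nu> * dual T \<mu> \<nu>)"

definition LF :: "(real \<Rightarrow> real \<Rightarrow> real) \<Rightarrow> real \<Rightarrow> real \<Rightarrow> real" where
  "LF L x y = deriv (\<lambda>t. L t y) x"
definition LG :: "(real \<Rightarrow> real \<Rightarrow> real) \<Rightarrow> real \<Rightarrow> real \<Rightarrow> real" where
  "LG L x y = deriv (\<lambda>s. L x s) y"
definition LFF :: "(real \<Rightarrow> real \<Rightarrow> real) \<Rightarrow> real \<Rightarrow> real \<Rightarrow> real" where
  "LFF L x y = deriv (\<lambda>t. LF L t y) x"
definition LFG :: "(real \<Rightarrow> real \<Rightarrow> real) \<Rightarrow> real \<Rightarrow> real \<Rightarrow> real" where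
  "LFG L x y = deriv (\<lambda>s. LF L x s) y"
definition LGG :: "(real \<Rightarrow> real \<Rightarrow> real) \<Rightarrow> real \<Rightarrow> real \<Rightarrow> real" where
  "LGG L x y = deriv (\<lambda>s. LG L x s) y"

definition Omega1 :: "(real \<Rightarrow> real \<Rightarrow> real) \<Rightarrow> real \<Rightarrow> real \<Rightarrow> real" where
  "Omega1 L x y = - LF L x y * LFG L x y + 2 * x * LFG L x y * LGG L x y
     + y * ((LGG L x y)\<^sup>2 - (LFG L x y)\<^sup>2)"
definition Omega2 :: "(real \<Rightarrow> real \<Rightarrow> real) \<Rightarrow> real \<Rightarrow> real \<Rightarrow> real" where
  "Omega2 L x y = (LF L x y + 2 * y * LFG L x y) * (LGG L x y - LFF L x y)
     + 2 * x * (LFF L x y * LGG L x y + (LFG L x y)\<^sup>2)"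
definition Omega3 :: "(real \<Rightarrow> real \<Rightarrow> real) \<Rightarrow> real \<Rightarrow> real \<Rightarrow> real" where
  "Omega3 L x y = LF L x y * LFG L x y + 2 * x * LFF L x y * LFG L x y
     + y * ((LFG L x y)\<^sup>2 - (LFF L x y)\<^sup>2)"

definition BI :: "real \<Rightarrow> real \<Rightarrow> real \<Rightarrow> real" where
  "BI b x y = sqrt (b^4 + 1/2 * b\<^sup>2 * x - 1/16 * y\<^sup>2) - b\<^sup>2"

definition BIregion :: "real \<Rightarrow> real \<Rightarrow> real \<Rightarrow> bool" where
  "BIregion b x y \<longleftrightarrow> b^4 + 1/2 * b\<^sup>2 * x - 1/16 * y\<^sup>2 > 0"

end

theory Submission
  imports Defs
begin

(* On its domain the Born-Infeld Lagrangian satisfies three linear relations between its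
   derivatives,
     L_F + G L_FG + (4b^2 + 2F) L_FF = 0,   G L_GG + (4b^2 + 2F) L_FG = 0,
     (4b^2 + 2F) L_FF = 4b^2 L_GG,
   read off from the explicit derivatives of sqrt(b^4 + b^2 F/2 - G^2/16). As 4b^2 + 2F > 0
   there, they express L_F, L_FF, L_FG as multiples of L_GG, and each Omega_i vanishes.
   For the dispersion relation, contract (E) with F_{mu alpha} k^alpha: antisymmetry, the
   duality identity and (C) turn it into
     L_F (xi/2) k.k - A F^mu_l F^{l nu} k_mu k_nu + B (G/4) k.k = 0,
   while the first two relations give L_F xi/2 + B G/4 = -(b^2 + F/2) A. Hence A times the
   claimed quadratic form vanishes, and A <> 0. *)

definition BI_radicand :: "real \<Rightarrow> real \<Rightarrow> real \<Rightarrow> real" where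
  "BI_radicand b x y = b^4 + 1/2 * b\<^sup>2 * x - 1/16 * y\<^sup>2"

lemma BI_eq: "BI b x y = sqrt (BI_radicand b x y) - b\<^sup>2"
  by (simp add: BI_def BI_radicand_def)

lemma BIregion_iff: "BIregion b x y \<longleftrightarrow> BI_radicand b x y > 0"
  by (simp add: BIregion_def BI_radicand_def)

lemma eventually_BIregion_F:
  assumes "BIregion b x y" shows "\<forall>\<^sub>F t in nhds x. BIregion b t y"
proof -
  have "open {t. 0 < BI_radicand b t y}"
    by (rule open_Collect_less) (auto simp: BI_radicand_def intro!: continuous_intros)
  then show ?thesis
    using assms eventually_nhds_in_open by (fastforce simp: BIregion_iff)
qed

lemma eventually_BIregion_G:
  assumes "BIregion b x y" shows "\<forall>\<^sub>F s in nhds y. BIregion b x s"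
proof -
  have "open {s. 0 < BI_radicand b x s}"
    by (rule open_Collect_less) (auto simp: BI_radicand_def intro!: continuous_intros)
  then show ?thesis
    using assms eventually_nhds_in_open by (fastforce simp: BIregion_iff)
qed

lemma deriv_eventually_eqI:
  fixes f g :: "real \<Rightarrow> real"
  assumes "\<forall>\<^sub>F t in nhds x. f t = g t" and "(g has_real_derivative D) (at x)"
  shows "deriv f x = D"
  using deriv_cong_ev[OF assms(1) refl] DERIV_imp_deriv[OF assms(2)] by simp

lemma BI_radicand_has_derivative_F:
  "((\<lambda>t. BI_radicand b t y) has_real_derivative b\<^sup>2 / 2) (at x)"
  unfolding BI_radicand_def by (auto intro!: derivative_eq_intros)

lemma BI_radicand_has_derivative_G:
  "((\<lambda>s. BI_radicand b x s) has_real_derivative - y / 8) (at y)"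
  unfolding BI_radicand_def by (auto intro!: derivative_eq_intros)

lemma LF_BI:
  assumes "BIregion b x y"
  shows "LF (BI b) x y = b\<^sup>2 / (4 * sqrt (BI_radicand b x y))"
proof -
  have "((\<lambda>t. BI b t y) has_real_derivative
          inverse (sqrt (BI_radicand b x y)) / 2 * (1/2 * b\<^sup>2)) (at x)"
    using assms unfolding BI_eq BIregion_iff
    by (auto intro!: derivative_eq_intros BI_radicand_has_derivative_F)
  then show ?thesis
    unfolding LF_def by (rule DERIV_imp_deriv[THEN trans]) (simp add: field_simps)
qed

lemma LG_BI:
  assumes "BIregion b x y"
  shows "LG (BI b) x y = - y / (16 * sqrt (BI_radicand b x y))"
proof -
  have "((\<lambda>s. BI b x s) has_real_derivative
          inverse (sqrt (BI_radicand b x y)) / 2 * (- 1/8 * y)) (at y)"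
    using assms unfolding BI_eq BIregion_iff
    by (auto intro!: derivative_eq_intros BI_radicand_has_derivative_G)
  then show ?thesis
    unfolding LG_def by (rule DERIV_imp_deriv[THEN trans]) (simp add: field_simps)
qed

lemma LFF_BI:
  assumes "BIregion b x y"
  shows "LFF (BI b) x y = - (b^4) / (16 * BI_radicand b x y * sqrt (BI_radicand b x y))"
proof (unfold LFF_def, rule deriv_eventually_eqI)
  show "\<forall>\<^sub>F t in nhds x. LF (BI b) t y = b\<^sup>2 / (4 * sqrt (BI_radicand b t y))"
    using eventually_BIregion_F[OF assms] by eventually_elim (rule LF_BI)
  show "((\<lambda>t. b\<^sup>2 / (4 * sqrt (BI_radicand b t y))) has_real_derivative
          - (b^4) / (16 * BI_radicand b x y * sqrt (BI_radicand b x y))) (at x)"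
    using assms unfolding BIregion_iff
    by (auto intro!: derivative_eq_intros BI_radicand_has_derivative_F
        simp: field_simps real_sqrt_mult_self)
qed

lemma LFG_BI:
  assumes "BIregion b x y"
  shows "LFG (BI b) x y = b\<^sup>2 * y / (64 * BI_radicand b x y * sqrt (BI_radicand b x y))"
proof (unfold LFG_def, rule deriv_eventually_eqI)
  show "\<forall>\<^sub>F s in nhds y. LF (BI b) x s = b\<^sup>2 / (4 * sqrt (BI_radicand b x s))"
    using eventually_BIregion_G[OF assms] by eventually_elim (rule LF_BI)
  show "((\<lambda>s. b\<^sup>2 / (4 * sqrt (BI_radicand b x s))) has_real_derivative
          b\<^sup>2 * y / (64 * BI_radicand b x y * sqrt (BI_radicand b x y))) (at y)"
    using assms unfolding BIregion_iff
    by (auto intro!: derivative_eq_intros BI_radicand_has_derivative_G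
        simp: field_simps real_sqrt_mult_self)
qed

lemma LGG_BI:
  assumes "BIregion b x y"
  shows "LGG (BI b) x y = - 1 / (16 * sqrt (BI_radicand b x y))
           - y\<^sup>2 / (256 * BI_radicand b x y * sqrt (BI_radicand b x y))"
proof (unfold LGG_def, rule deriv_eventually_eqI)
  show "\<forall>\<^sub>F s in nhds y. LG (BI b) x s = - s / (16 * sqrt (BI_radicand b x s))"
    using eventually_BIregion_G[OF assms] by eventually_elim (rule LG_BI)
  show "((\<lambda>s. - s / (16 * sqrt (BI_radicand b x s))) has_real_derivative
          - 1 / (16 * sqrt (BI_radicand b x y))
          - y\<^sup>2 / (256 * BI_radicand b x y * sqrt (BI_radicand b x y))) (at y)"
    using assms unfolding BIregion_iff
    by (auto intro!: derivative_eq_intros BI_radicand_has_derivative_G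
        simp: field_simps real_sqrt_mult_self power2_eq_square)
qed

lemma BI_derivative_relations:
  assumes "BIregion b x y"
  shows "LF (BI b) x y + y * LFG (BI b) x y + (4 * b\<^sup>2 + 2 * x) * LFF (BI b) x y = 0"
    and "y * LGG (BI b) x y + (4 * b\<^sup>2 + 2 * x) * LFG (BI b) x y = 0"
    and "(4 * b\<^sup>2 + 2 * x) * LFF (BI b) x y = 4 * b\<^sup>2 * LGG (BI b) x y"
proof -
  define r where "r = BI_radicand b x y"
  have "r > 0" "b \<noteq> 0"
    using assms zero_le_power2[of y] by (auto simp: r_def BIregion_iff BI_radicand_def)
  then have facts: "sqrt r > 0" "sqrt r * sqrt r = r" "b \<noteq> 0"
    and x: "x = (16 * r - 16 * b^4 + y\<^sup>2) / (8 * b\<^sup>2)"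
    by (auto simp: r_def BI_radicand_def field_simps)
  show "LF (BI b) x y + y * LFG (BI b) x y + (4 * b\<^sup>2 + 2 * x) * LFF (BI b) x y = 0"
    unfolding LF_BI[OF assms] LFG_BI[OF assms] LFF_BI[OF assms] r_def[symmetric]
    using facts by (simp add: x field_simps power2_eq_square power4_eq_xxxx)
  show "y * LGG (BI b) x y + (4 * b\<^sup>2 + 2 * x) * LFG (BI b) x y = 0"
    unfolding LGG_BI[OF assms] LFG_BI[OF assms] r_def[symmetric]
    using facts by (simp add: x field_simps power2_eq_square power4_eq_xxxx)
  show "(4 * b\<^sup>2 + 2 * x) * LFF (BI b) x y = 4 * b\<^sup>2 * LGG (BI b) x y"
    unfolding LGG_BI[OF assms] LFF_BI[OF assms] r_def[symmetric]
    using facts by (simp add: x field_simps power2_eq_square power4_eq_xxxx)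
qed

lemma BIregion_coefficient_pos:
  assumes "BIregion b x y"
  shows "0 < 4 * b\<^sup>2 + 2 * x"
proof -
  have "y\<^sup>2 / 4 < b\<^sup>2 * (4 * b\<^sup>2 + 2 * x)"
    using assms by (simp add: BIregion_def algebra_simps power4_eq_xxxx power2_eq_square)
  moreover have "0 \<le> y\<^sup>2 / 4"
    by simp
  ultimately have "0 < b\<^sup>2 * (4 * b\<^sup>2 + 2 * x)"
    by linarith
  then show ?thesis
    by (simp add: zero_less_mult_iff)
qed

lemma Omegas_vanish_if_relations:
  fixes L :: "real \<Rightarrow> real \<Rightarrow> real"
  assumes rel_F: "LF L x y + y * LFG L x y + (4 * c + 2 * x) * LFF L x y = 0"
    and rel_G: "y * LGG L x y + (4 * c + 2 * x) * LFG L x y = 0"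
    and rel_FG: "(4 * c + 2 * x) * LFF L x y = 4 * c * LGG L x y"
    and nonzero: "4 * c + 2 * x \<noteq> 0"
  shows "Omega1 L x y = 0" "Omega2 L x y = 0" "Omega3 L x y = 0"
proof -
  define d where "d = 4 * c + 2 * x"
  define g where "g = LGG L x y"
  have lfg: "LFG L x y = - y * g / d" and lff: "LFF L x y = 4 * c * g / d"
    using rel_G rel_FG nonzero unfolding d_def[symmetric] g_def[symmetric]
    by (auto simp: field_simps)
  have d: "d \<noteq> 0" and x: "x = (d - 4 * c) / 2"
    using nonzero by (auto simp: d_def)
  have "LF L x y = - y * LFG L x y - d * LFF L x y"
    using rel_F by (simp add: d_def)
  also have "\<dots> = y\<^sup>2 * g / d - 4 * c * g"
    using d by (simp add: lfg lff field_simps power2_eq_square)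
  finally have lf: "LF L x y = y\<^sup>2 * g / d - 4 * c * g" .
  show "Omega1 L x y = 0" "Omega2 L x y = 0" "Omega3 L x y = 0"
    unfolding Omega1_def Omega2_def Omega3_def lf lff lfg g_def[symmetric]
    using d by (simp_all add: x field_simps power2_eq_square)
qed

lemma sum_lessThan_4: "(\<Sum>i<4. g i) = g 0 + g 1 + g 2 + g (3::nat)"
  by (simp add: eval_nat_numeral)

lemma less_4_cases: "(i::nat) < 4 \<Longrightarrow> i = 0 \<or> i = 1 \<or> i = 2 \<or> i = 3"
  by auto

lemma raise2_diagonal: "\<mu> < 4 \<Longrightarrow> \<nu> < 4 \<Longrightarrow> raise2 T \<mu> \<nu> = eta \<mu> \<mu> * eta \<nu> \<nu> * T \<mu> \<nu>"
  unfolding raise2_def sum_lessThan_4 by (auto simp: eta_def dest!: less_4_cases)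

lemma raise1_diagonal: "\<mu> < 4 \<Longrightarrow> raise1 T \<mu> l = eta \<mu> \<mu> * T \<mu> l"
  unfolding raise1_def sum_lessThan_4 by (auto simp: eta_def dest!: less_4_cases)

lemma antisym2_components:
  assumes "antisym2 T"
  shows "T 0 0 = 0" "T 1 1 = 0" "T 2 2 = 0" "T 3 3 = 0"
    "T 1 0 = - T 0 1" "T 2 0 = - T 0 2" "T 3 0 = - T 0 3"
    "T 2 1 = - T 1 2" "T 3 1 = - T 1 3" "T 3 2 = - T 2 3"
proof -
  have "T i j = - T j i" if "i < 4" "j < 4" for i j
    using assms that unfolding antisym2_def by blast
  from this[of 0 0] this[of 1 1] this[of 2 2] this[of 3 3] this[of 1 0] this[of 2 0] this[of 3 0]
    this[of 2 1] this[of 3 1] this[of 3 2]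
  show "T 0 0 = 0" "T 1 1 = 0" "T 2 2 = 0" "T 3 3 = 0"
    "T 1 0 = - T 0 1" "T 2 0 = - T 0 2" "T 3 0 = - T 0 3"
    "T 2 1 = - T 1 2" "T 3 1 = - T 1 3" "T 3 2 = - T 2 3" by simp_all
qed

lemma dual_components:
  assumes "antisym2 T"
  shows "dual T 0 0 = 0" "dual T 0 1 = T 2 3" "dual T 0 2 = - T 1 3" "dual T 0 3 = T 1 2"
    "dual T 1 0 = - T 2 3" "dual T 1 1 = 0" "dual T 1 2 = - T 0 3" "dual T 1 3 = T 0 2"
    "dual T 2 0 = T 1 3" "dual T 2 1 = T 0 3" "dual T 2 2 = 0" "dual T 2 3 = - T 0 1"
    "dual T 3 0 = - T 1 2" "dual T 3 1 = - T 0 2" "dual T 3 2 = T 0 1" "dual T 3 3 = 0"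
  using antisym2_components[OF assms] by (simp_all add: dual_def sum_lessThan_4 levi_def eta_def)

lemmas component_simps =
  sum_lessThan_4 raise2_diagonal raise1_diagonal eta_def

lemma contraction_F_F:
  assumes "antisym2 F"
  shows "(\<Sum>\<mu><4. (\<Sum>\<alpha><4. F \<mu> \<alpha> * eta \<alpha> \<alpha> * k \<alpha>) * (\<Sum>\<nu><4. raise2 F \<mu> \<nu> * k \<nu>))
    = - (\<Sum>\<mu><4. \<Sum>\<nu><4. (\<Sum>l<4. raise1 F \<mu> l * raise2 F l \<nu>) * k \<mu> * k \<nu>)"
  by (simp add: component_simps antisym2_components[OF assms, unfolded One_nat_def]) algebra

lemma contraction_F_dual:
  assumes "antisym2 F"
  shows "(\<Sum>\<mu><4. (\<Sum>\<alpha><4. F \<mu> \<alpha> * eta \<alpha> \<alpha> * k \<alpha>) * (\<Sum>\<nu><4. raise2 (dual F) \<mu> \<nu> * k \<nu>))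
    = invG F / 4 * (\<Sum>\<mu><4. \<Sum>\<nu><4. eta \<mu> \<nu> * k \<mu> * k \<nu>)"
  unfolding invG_def
  by (simp add: component_simps antisym2_components[OF assms, unfolded One_nat_def]
      dual_components[OF assms, unfolded One_nat_def]) algebra

lemma contraction_F_f:
  assumes "antisym2 F" "antisym2 f"
    and cyclic: "\<forall>\<mu><4. \<forall>\<nu><4. \<forall>l<4. f \<mu> \<nu> * k l + f \<nu> l * k \<mu> + f l \<mu> * k \<nu> = 0"
  shows "(\<Sum>\<mu><4. (\<Sum>\<alpha><4. F \<mu> \<alpha> * eta \<alpha> \<alpha> * k \<alpha>) * (\<Sum>\<nu><4. raise2 f \<mu> \<nu> * k \<nu>))
    = (\<Sum>\<alpha><4. \<Sum>\<beta><4. raise2 F \<alpha> \<beta> * f \<alpha> \<beta>) / 2 * (\<Sum>\<mu><4. \<Sum>\<nu><4. eta \<mu> \<nu> * k \<mu> * k \<nu>)"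
proof -
  have "(\<Sum>\<mu><4. (\<Sum>\<alpha><4. F \<mu> \<alpha> * eta \<alpha> \<alpha> * k \<alpha>) * (\<Sum>\<nu><4. raise2 f \<mu> \<nu> * k \<nu>))
    = (\<Sum>\<alpha><4. \<Sum>\<beta><4. raise2 F \<alpha> \<beta> * f \<alpha> \<beta>) / 2 * (\<Sum>\<mu><4. \<Sum>\<nu><4. eta \<mu> \<nu> * k \<mu> * k \<nu>)
      - 1/2 * (\<Sum>l<4. eta l l * k l * (\<Sum>\<mu><4. \<Sum>\<nu><4. raise2 F \<mu> \<nu> *
          (f \<mu> \<nu> * k l + f \<nu> l * k \<mu> + f l \<mu> * k \<nu>)))"
    \<comment> \<open>the last term is (C) contracted with F^{mu nu} k^l\<close>
    by (simp add: component_simps antisym2_components[OF assms(1), unfolded One_nat_def]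
        antisym2_components[OF assms(2), unfolded One_nat_def]) algebra
  also have "(\<Sum>l<4. eta l l * k l * (\<Sum>\<mu><4. \<Sum>\<nu><4. raise2 F \<mu> \<nu> *
          (f \<mu> \<nu> * k l + f \<nu> l * k \<mu> + f l \<mu> * k \<nu>))) = 0"
    using cyclic by simp
  finally show ?thesis by simp
qed

lemma field_equation_contracted:
  assumes "antisym2 F" "antisym2 f"
    and cyclic: "\<forall>\<mu><4. \<forall>\<nu><4. \<forall>l<4. f \<mu> \<nu> * k l + f \<nu> l * k \<mu> + f l \<mu> * k \<nu> = 0"
    and field_eq: "\<forall>\<mu><4. a * (\<Sum>\<nu><4. raise2 f \<mu> \<nu> * k \<nu>) + p * (\<Sum>\<nu><4. raise2 F \<mu> \<nu> * k \<nu>)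
                     + q * (\<Sum>\<nu><4. raise2 (dual F) \<mu> \<nu> * k \<nu>) = 0"
  shows "a * (\<Sum>\<alpha><4. \<Sum>\<beta><4. raise2 F \<alpha> \<beta> * f \<alpha> \<beta>) / 2 * (\<Sum>\<mu><4. \<Sum>\<nu><4. eta \<mu> \<nu> * k \<mu> * k \<nu>)
    - p * (\<Sum>\<mu><4. \<Sum>\<nu><4. (\<Sum>l<4. raise1 F \<mu> l * raise2 F l \<nu>) * k \<mu> * k \<nu>)
    + q * invG F / 4 * (\<Sum>\<mu><4. \<Sum>\<nu><4. eta \<mu> \<nu> * k \<mu> * k \<nu>) = 0"
proof -
  define v where "v \<mu> = (\<Sum>\<alpha><4. F \<mu> \<alpha> * eta \<alpha> \<alpha> * k \<alpha>)" for \<mu>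
  have "0 = (\<Sum>\<mu><4. v \<mu> * (a * (\<Sum>\<nu><4. raise2 f \<mu> \<nu> * k \<nu>) + p * (\<Sum>\<nu><4. raise2 F \<mu> \<nu> * k \<nu>)
                     + q * (\<Sum>\<nu><4. raise2 (dual F) \<mu> \<nu> * k \<nu>)))"
    using field_eq by simp
  also have "\<dots> = a * (\<Sum>\<mu><4. v \<mu> * (\<Sum>\<nu><4. raise2 f \<mu> \<nu> * k \<nu>))
      + p * (\<Sum>\<mu><4. v \<mu> * (\<Sum>\<nu><4. raise2 F \<mu> \<nu> * k \<nu>))
      + q * (\<Sum>\<mu><4. v \<mu> * (\<Sum>\<nu><4. raise2 (dual F) \<mu> \<nu> * k \<nu>))"
    by (simp add: sum.distrib sum_distrib_left algebra_simps)
  finally show ?thesis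
    unfolding v_def contraction_F_f[OF assms(1-3)] contraction_F_F[OF assms(1)]
      contraction_F_dual[OF assms(1)] by simp
qed

lemma wave_vector_null_for_effective_metric:
  fixes L :: "real \<Rightarrow> real \<Rightarrow> real" and F f :: "nat \<Rightarrow> nat \<Rightarrow> real"
    and k :: "nat \<Rightarrow> real" and c :: real
  defines "x \<equiv> invF F" and "y \<equiv> invG F"
    and "xi \<equiv> (\<Sum>\<alpha><4. \<Sum>\<beta><4. raise2 F \<alpha> \<beta> * f \<alpha> \<beta>)"
    and "zeta \<equiv> (\<Sum>\<alpha><4. \<Sum>\<beta><4. raise2 (dual F) \<alpha> \<beta> * f \<alpha> \<beta>)"
  defines "A \<equiv> 2 * (xi * LFF L x y + zeta * LFG L x y)"
    and "B \<equiv> 2 * (xi * LFG L x y + zeta * LGG L x y)"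
  assumes "antisym2 F" "antisym2 f"
    and cyclic: "\<forall>\<mu><4. \<forall>\<nu><4. \<forall>l<4. f \<mu> \<nu> * k l + f \<nu> l * k \<mu> + f l \<mu> * k \<nu> = 0"
    and rel_F: "LF L x y + y * LFG L x y + (4 * c + 2 * x) * LFF L x y = 0"
    and rel_G: "y * LGG L x y + (4 * c + 2 * x) * LFG L x y = 0"
    and field_eq: "\<forall>\<mu><4. LF L x y * (\<Sum>\<nu><4. raise2 f \<mu> \<nu> * k \<nu>) + A * (\<Sum>\<nu><4. raise2 F \<mu> \<nu> * k \<nu>)
                     + B * (\<Sum>\<nu><4. raise2 (dual F) \<mu> \<nu> * k \<nu>) = 0"
    and "A \<noteq> 0"
  shows "(\<Sum>\<mu><4. \<Sum>\<nu><4.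
           ((c + 1/2 * x) * eta \<mu> \<nu> + (\<Sum>l<4. raise1 F \<mu> l * raise2 F l \<nu>)) * k \<mu> * k \<nu>) = 0"
proof -
  define K where "K = (\<Sum>\<mu><4. \<Sum>\<nu><4. eta \<mu> \<nu> * k \<mu> * k \<nu>)"
  define Q where "Q = (\<Sum>\<mu><4. \<Sum>\<nu><4. (\<Sum>l<4. raise1 F \<mu> l * raise2 F l \<nu>) * k \<mu> * k \<nu>)"
  have contracted: "LF L x y * xi / 2 * K - A * Q + B * y / 4 * K = 0"
    using field_equation_contracted[OF assms(7-9) field_eq]
    unfolding K_def Q_def xi_def y_def by simp
  have "LF L x y * xi / 2 + B * y / 4 + (c + 1/2 * x) * A
      = xi / 2 * (LF L x y + y * LFG L x y + (4 * c + 2 * x) * LFF L x y)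
        + zeta / 2 * (y * LGG L x y + (4 * c + 2 * x) * LFG L x y)"
    unfolding A_def B_def by (simp add: algebra_simps)
  then have lagrangian_identity: "LF L x y * xi / 2 + B * y / 4 + (c + 1/2 * x) * A = 0"
    using rel_F rel_G by simp
  have "A * ((c + 1/2 * x) * K + Q)
      = (LF L x y * xi / 2 + B * y / 4 + (c + 1/2 * x) * A) * K
        - (LF L x y * xi / 2 * K - A * Q + B * y / 4 * K)"
    by (simp add: algebra_simps)
  also have "\<dots> = 0"
    by (simp only: lagrangian_identity contracted)
  finally have "A * ((c + 1/2 * x) * K + Q) = 0" .
  then have "(c + 1/2 * x) * K + Q = 0"
    using \<open>A \<noteq> 0\<close> by simp
  then show ?thesis
    unfolding K_def Q_def by (simp add: sum.distrib sum_distrib_left algebra_simps)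
qed

theorem mainTheorem4:
  fixes b :: real
  assumes "b > 0"
  shows "(\<forall>x y. BIregion b x y \<longrightarrow>
            Omega1 (BI b) x y = 0 \<and> Omega2 (BI b) x y = 0 \<and> Omega3 (BI b) x y = 0)
     \<and> (\<forall>(Fb :: nat \<Rightarrow> nat \<Rightarrow> real) (f :: nat \<Rightarrow> nat \<Rightarrow> real) (k :: nat \<Rightarrow> real).
          antisym2 Fb \<longrightarrow> antisym2 f \<longrightarrow> BIregion b (invF Fb) (invG Fb) \<longrightarrow>
          (\<forall>\<mu><4. \<forall>\<nu><4. \<forall>l<4. f \<mu> \<nu> * k l + f \<nu> l * k \<mu> + f l \<mu> * k \<nu> = 0) \<longrightarrow>
          (let xi = (\<Sum>\<alpha><4. \<Sum>\<beta><4. raise2 Fb \<alpha> \<beta> * f \<alpha> \<beta>);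
               zeta = (\<Sum>\<alpha><4. \<Sum>\<beta><4. raise2 (dual Fb) \<alpha> \<beta> * f \<alpha> \<beta>);
               x = invF Fb; y = invG Fb;
               A = 2 * (xi * LFF (BI b) x y + zeta * LFG (BI b) x y);
               B = 2 * (xi * LFG (BI b) x y + zeta * LGG (BI b) x y)
           in (\<forall>\<mu><4. LF (BI b) x y * (\<Sum>\<nu><4. raise2 f \<mu> \<nu> * k \<nu>)
                      + A * (\<Sum>\<nu><4. raise2 Fb \<mu> \<nu> * k \<nu>)
                      + B * (\<Sum>\<nu><4. raise2 (dual Fb) \<mu> \<nu> * k \<nu>) = 0) \<longrightarrow>
              A \<noteq> 0 \<longrightarrow>
              (\<Sum>\<mu><4. \<Sum>\<nu><4.
                 ((b\<^sup>2 + 1/2 * x) * eta \<mu> \<nu>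
                  + (\<Sum>l<4. raise1 Fb \<mu> l * raise2 Fb l \<nu>)) * k \<mu> * k \<nu>) = 0))"
proof ((rule conjI; intro allI impI), goal_cases)
  case (1 x y)
  then have "4 * b\<^sup>2 + 2 * x \<noteq> 0"
    using BIregion_coefficient_pos by fastforce
  with 1 show ?case
    using Omegas_vanish_if_relations[OF BI_derivative_relations] by simp
next
  case (2 Fb f k)
  then show ?case
    unfolding Let_def
    by (intro impI wave_vector_null_for_effective_metric[where L = "BI b" and c = "b\<^sup>2"]
        BI_derivative_relations) simp_all
qed

end
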